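(* Fix $k$, $\theta^{(k-1)}\in\mathbb{R}^d$, step sizes $h_k,h_{k-1}>0$, $\beta_k\ge0$, and $p^{(k-1)}\in\mathbb{R}^d$; set $\theta^{(k)}=\theta^{(k-1)}+h_{k-1}p^{(k-1)}$, $v^{(k)}=D(\theta^{(k)})$, $v^{(k-1)}=D(\theta^{(k-1)})$ and $z^{(k-1)}\in\mathbb{R}^d$ with entries $z^{(k-1)}_i=(\psi^{(k)}_i,v^{(k)}-v^{(k-1)})_X$. Define the natural Heavy-Ball momentum $$p^{(k)}=\beta_k\,G_X^{(k)\dagger}G_X^{(k,k-1)}p^{(k-1)}-h_k\,G^{(k)\dagger}\nabla L(\theta^{(k)})$$ and the functional-difference momentum $$\widehat{p^{(k)}}=\frac{\beta_k}{h_{k-1}}\,G_X^{(k)\dagger}z^{(k-1)}-h_k\,G^{(k)\dagger}\nabla L(\theta^{(k)}).$$ Then $$\big\|\psi^{(k)T}\widehat{p^{(k)}}-\psi^{(k)T}p^{(k)}\big\|_X\le\frac{h_{k-1}}{2}\,\beta_k\,\kappa_{\max}(\theta^{(k-1)})\,\|p^{(k-1)}\|_2^2+o\big(h_{k-1}\|p^{(k-1)}\|_2^2\big),$$ where the remainder is understood as $h_{k-1}\|p^{(k-1)}\|_2\to0$ with $\theta^{(k-1)}$ fixed.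
   Context: $D:\mathbb{R}^d\to H$ is a twice continuously Fréchet differentiable map into a space $H$ of functions equipped with an inner product $(\cdot,\cdot)_X$ and norm $\|\cdot\|_X$. Write $\psi(\theta)=(\psi_1(\theta),\dots,\psi_d(\theta))$ with $\psi_i(\theta)=\frac{\partial D}{\partial\theta_i}(\theta)$, and for $c\in\mathbb{R}^d$, $\psi(\theta)^Tc=\sum_i c_i\psi_i(\theta)$. Let $\psi^{(j)}=\psi(\theta^{(j)})$. $G_X^{(k)}$ is the $d\times d$ Gram matrix with entries $(\psi^{(k)}_i,\psi^{(k)}_j)_X$, $G_X^{(k,k-1)}$ the cross-Gram matrix with entries $(\psi^{(k)}_i,\psi^{(k-1)}_j)_X$, and $\dagger$ denotes the Moore–Penrose pseudo-inverse. $G^{(k)}$ is any symmetric positive semi-definite $d\times d$ matrix and $\nabla L(\theta^{(k)})\in\mathbb{R}^d$ the gradient of the parameter loss $L=\mathcal{L}\circ D$; these terms are the same in both momenta. $H_D(\theta):\mathbb{R}^d\times\mathbb{R}^d\to H$ denotes the second derivative of $D$ at $\theta$, and $\kappa_{\max}(\theta)=\max_{q\in\mathbb{R}^d,\|q\|_2=1}\|H_D(\theta)(q,q)\|_X$. *)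

theory Defs
  imports "HOL-Analysis.Analysis"
begin

text \<open>Parameters live in real^'d (Euclidean norm), the function space H is an abstract
real inner product space 'h. DD :: real^'d => (real^'d =>L 'h) is the first Frechet derivative
of D, DD2 the second one.\<close>

definition psi :: "(real^'d \<Rightarrow> ((real^'d) \<Rightarrow>\<^sub>L 'h::real_normed_vector)) \<Rightarrow> real^'d \<Rightarrow> 'd \<Rightarrow> 'h" where
  "psi DD \<theta> i = blinfun_apply (DD \<theta>) (axis i 1)"

definition psiT :: "(real^'d \<Rightarrow> ((real^'d) \<Rightarrow>\<^sub>L 'h::real_normed_vector)) \<Rightarrow> real^'d \<Rightarrow> real^'d \<Rightarrow> 'h" where
  "psiT DD \<theta> c = (\<Sum>i\<in>UNIV. (c $ i) *\<^sub>R psi DD \<theta> i)"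

definition gramX :: "(real^'d \<Rightarrow> ((real^'d) \<Rightarrow>\<^sub>L 'h::real_inner)) \<Rightarrow> real^'d \<Rightarrow> real^'d^'d" where
  "gramX DD \<theta> = (\<chi> i j. inner (psi DD \<theta> i) (psi DD \<theta> j))"

definition cross_gramX :: "(real^'d \<Rightarrow> ((real^'d) \<Rightarrow>\<^sub>L 'h::real_inner)) \<Rightarrow> real^'d \<Rightarrow> real^'d \<Rightarrow> real^'d^'d" where
  "cross_gramX DD \<theta> \<theta>' = (\<chi> i j. inner (psi DD \<theta> i) (psi DD \<theta>' j))"

definition pinv :: "real^'n^'n \<Rightarrow> real^'n^'n" where
  "pinv A = (THE X. A ** X ** A = A \<and> X ** A ** X = X \<and>
                    transpose (A ** X) = A ** X \<and> transpose (X ** A) = X ** A)"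

definition kappa_max :: "(real^'d \<Rightarrow> ((real^'d) \<Rightarrow>\<^sub>L ((real^'d) \<Rightarrow>\<^sub>L 'h::real_normed_vector))) \<Rightarrow> real^'d \<Rightarrow> real" where
  "kappa_max DD2 \<theta> = (SUP q\<in>sphere 0 1. norm (blinfun_apply (blinfun_apply (DD2 \<theta>) q) q))"

text \<open>Natural Heavy-Ball momentum p^(k) at theta^(k) = theta1, previous iterate theta0.\<close>
definition hb_momentum ::
  "(real^'d \<Rightarrow> ((real^'d) \<Rightarrow>\<^sub>L 'h::real_inner)) \<Rightarrow> real^'d^'d \<Rightarrow> real^'d \<Rightarrow>
   real \<Rightarrow> real \<Rightarrow> real^'d \<Rightarrow> real^'d \<Rightarrow> real^'d \<Rightarrow> real^'d" where
  "hb_momentum DD Gk gradLk \<beta> hk \<theta>0 \<theta>1 p =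
     \<beta> *\<^sub>R (pinv (gramX DD \<theta>1) *v (cross_gramX DD \<theta>1 \<theta>0 *v p)) - hk *\<^sub>R (pinv Gk *v gradLk)"

definition zvec :: "(real^'d \<Rightarrow> 'h::real_inner) \<Rightarrow> (real^'d \<Rightarrow> ((real^'d) \<Rightarrow>\<^sub>L 'h)) \<Rightarrow>
   real^'d \<Rightarrow> real^'d \<Rightarrow> real^'d" where
  "zvec D DD \<theta>0 \<theta>1 = (\<chi> i. inner (psi DD \<theta>1 i) (D \<theta>1 - D \<theta>0))"

definition fd_momentum ::
  "(real^'d \<Rightarrow> 'h::real_inner) \<Rightarrow> (real^'d \<Rightarrow> ((real^'d) \<Rightarrow>\<^sub>L 'h)) \<Rightarrow> real^'d^'d \<Rightarrow> real^'d \<Rightarrow>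
   real \<Rightarrow> real \<Rightarrow> real \<Rightarrow> real^'d \<Rightarrow> real^'d \<Rightarrow> real^'d" where
  "fd_momentum D DD Gk gradLk \<beta> hk hprev \<theta>0 \<theta>1 =
     (\<beta> / hprev) *\<^sub>R (pinv (gramX DD \<theta>1) *v zvec D DD \<theta>0 \<theta>1) - hk *\<^sub>R (pinv Gk *v gradLk)"

end

theory Submission
  imports Defs
begin

text \<open>Write \<open>\<theta>1 = \<theta>0 + h p\<close>, let \<open>L\<close> be the derivative of \<open>D\<close> at \<open>\<theta>1\<close> (so \<open>\<psi>(\<theta>1)\<^sup>T c = L c\<close>)
  and \<open>L\<^sup>*\<close> its adjoint. Then \<open>G\<^sub>X(\<theta>1) = L\<^sup>* L\<close>, \<open>G\<^sub>X(\<theta>1,\<theta>0) p = L\<^sup>* (D'(\<theta>0) p)\<close> and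
  \<open>z = L\<^sup>* (D \<theta>1 - D \<theta>0)\<close>. The gradient terms of the two momenta cancel, leaving \<open>\<beta>/h\<close> times
  \<open>L G\<^sub>X(\<theta>1)\<^sup>\<dagger> L\<^sup>*\<close> applied to the first-order Taylor remainder \<open>r = D \<theta>1 - D \<theta>0 - h D'(\<theta>0) p\<close>.
  That operator is the orthogonal projection onto the span of the \<open>\<psi>\<^sub>i(\<theta>1)\<close>, hence a
  contraction, and by second-order Taylor expansion \<open>r = h\<^sup>2/2 H\<^sub>D(\<theta>0)(p,p) + o(h\<^sup>2 |p|\<^sup>2)\<close>
  with \<open>|H\<^sub>D(\<theta>0)(p,p)| \<le> \<kappa>\<^sub>m\<^sub>a\<^sub>x(\<theta>0) |p|\<^sup>2\<close>.\<close>

definition is_pseudo_inverse :: "real^'n^'n \<Rightarrow> real^'n^'n \<Rightarrow> bool" where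
  "is_pseudo_inverse A X \<longleftrightarrow> A ** X ** A = A \<and> X ** A ** X = X \<and>
     transpose (A ** X) = A ** X \<and> transpose (X ** A) = X ** A"

lemma pseudo_inverse_unique:
  assumes "is_pseudo_inverse A X" "is_pseudo_inverse A Y"
  shows "X = Y"
proof -
  have X: "A ** X ** A = A" "X ** A ** X = X" "transpose (A ** X) = A ** X" "transpose (X ** A) = X ** A"
    using assms(1) by (auto simp: is_pseudo_inverse_def)
  have Y: "A ** Y ** A = A" "Y ** A ** Y = Y" "transpose (A ** Y) = A ** Y" "transpose (Y ** A) = Y ** A"
    using assms(2) by (auto simp: is_pseudo_inverse_def)
  have "X = X ** (A ** X)" using X by (simp add: matrix_mul_assoc)
  also have "\<dots> = X ** (transpose X ** transpose A)" using X by (metis matrix_transpose_mul)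
  also have "\<dots> = X ** (transpose X ** transpose (A ** Y ** A))" using Y by simp
  also have "\<dots> = X ** (transpose (A ** X) ** transpose (A ** Y))"
    by (simp add: matrix_transpose_mul matrix_mul_assoc)
  also have "\<dots> = X ** A ** Y" using X Y by (simp add: matrix_mul_assoc)
  finally have XAY: "X = X ** A ** Y" .
  have "Y = Y ** A ** Y" using Y by simp
  also have "\<dots> = transpose A ** transpose Y ** Y" using Y by (metis matrix_transpose_mul)
  also have "\<dots> = transpose (A ** X ** A) ** transpose Y ** Y" using X by simp
  also have "\<dots> = transpose (X ** A) ** transpose (Y ** A) ** Y"
    by (simp add: matrix_transpose_mul matrix_mul_assoc)
  also have "\<dots> = X ** A ** (Y ** A ** Y)" by (simp only: X(4) Y(4) matrix_mul_assoc)
  also have "\<dots> = X ** A ** Y" using Y by simp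
  finally show ?thesis using XAY by simp
qed

lemma transpose_eq_self_iff_self_adjoint:
  fixes M :: "real^'n^'n"
  shows "transpose M = M \<longleftrightarrow> (\<forall>x y. (M *v x) \<bullet> y = x \<bullet> (M *v y))"
proof
  assume "transpose M = M"
  then show "\<forall>x y. (M *v x) \<bullet> y = x \<bullet> (M *v y)"
    by (metis dot_lmul_matrix transpose_matrix_vector)
next
  assume "\<forall>x y. (M *v x) \<bullet> y = x \<bullet> (M *v y)"
  then have "(transpose M *v x) \<bullet> y = (M *v x) \<bullet> y" for x y
    by (metis dot_lmul_matrix transpose_matrix_vector)
  then have "transpose M *v x = M *v x" for x
    by (metis vector_eq_rdot)
  then show "transpose M = M"
    by (simp add: matrix_eq)
qed

lemma orthogonal_projection_exists:
  fixes S :: "'a::euclidean_space set"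
  assumes "subspace S"
  obtains P where "linear P" "\<And>x. P x \<in> S" "\<And>x. x \<in> S \<Longrightarrow> P x = x"
    "\<And>x y. P x \<bullet> y = x \<bullet> P y"
proof -
  obtain T where T: "pairwise orthogonal T" "span T = S"
    using orthogonal_basis_subspace[OF assms] by metis
  define P where "P y = (\<Sum>b\<in>T. (b \<bullet> y / (b \<bullet> b)) *\<^sub>R b)" for y
  have "linear P"
    unfolding P_def[abs_def]
    by (intro linear_compose_sum) (auto simp: linear_iff inner_add_right scaleR_add_left add_divide_distrib)
  moreover have range: "P y \<in> S" for y
    unfolding P_def T(2)[symmetric] by (intro span_sum span_mul span_base)
  moreover have perp: "orthogonal w (y - P y)" if "w \<in> S" for w y
    unfolding P_def using T that Gram_Schmidt_step[of T w y] by simp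
  moreover have "P y = y" if "y \<in> S" for y
    using perp[of "y - P y" y] subspace_diff[OF assms that range[of y]] by (simp add: orthogonal_self)
  moreover have "P x \<bullet> y = x \<bullet> P y" for x y
    using perp[OF range, of x y] perp[OF range, of y x]
    by (simp add: orthogonal_def inner_diff_right inner_commute)
  ultimately show ?thesis using that by blast
qed

lemma inj_on_range_symmetric_matrix:
  fixes A :: "real^'n^'n"
  assumes "transpose A = A"
  shows "inj_on ((*v) A) (range ((*v) A))"
proof -
  have "x = 0" if x: "x \<in> range ((*v) A)" "A *v x = 0" for x
  proof -
    obtain w where "x = A *v w" using x(1) by blast
    then have "x \<bullet> x = w \<bullet> (A *v x)"
      using assms transpose_eq_self_iff_self_adjoint by metis
    with x(2) show ?thesis by simp
  qed
  then show ?thesis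
    by (simp add: linear_injective_on_subspace_0 subspace_UNIV linear_subspace_image)
qed

text \<open>For symmetric \<open>A\<close>, the map \<open>A\<close> is injective on its range \<open>R\<close>; a pseudo-inverse is
  its inverse on \<open>R\<close> composed with the orthogonal projection \<open>P\<close> onto \<open>R\<close>, so that
  \<open>A X = X A = P\<close>.\<close>

lemma pseudo_inverse_exists:
  fixes A :: "real^'n^'n"
  assumes "transpose A = A"
  shows "\<exists>X. is_pseudo_inverse A X"
proof -
  define R where "R = range ((*v) A)"
  have R: "subspace R"
    unfolding R_def by (simp add: subspace_UNIV linear_subspace_image)
  have self_adjoint: "(A *v x) \<bullet> y = x \<bullet> (A *v y)" for x y
    using assms transpose_eq_self_iff_self_adjoint by metis
  obtain P where P: "linear P" "\<And>x. P x \<in> R" "\<And>x. x \<in> R \<Longrightarrow> P x = x"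
      "\<And>x y. P x \<bullet> y = x \<bullet> P y"
    using orthogonal_projection_exists[OF R] by blast
  have AP: "A *v P v = A *v v" for v
  proof -
    have "(A *v (v - P v)) \<bullet> u = 0" for u
      using self_adjoint[of "v - P v" u] P(3)[of "A *v u"] P(4)[of v "A *v u"]
      by (simp add: R_def inner_diff_left)
    then show ?thesis
      by (metis inner_eq_zero_iff matrix_vector_mult_diff_distrib eq_iff_diff_eq_0)
  qed
  obtain g where g: "range g \<subseteq> R" "linear g" "\<And>v. v \<in> R \<Longrightarrow> g (A *v v) = v"
    using linear_exists_left_inverse_on[OF _ R inj_on_range_symmetric_matrix[OF assms, folded R_def]]
    by auto
  have gA: "g (A *v v) = P v" for v
    using g(3)[OF P(2)] AP by metis
  have Ag: "A *v g (P y) = P y" for y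
  proof -
    obtain v where "P y = A *v v" using P(2) by (auto simp: R_def)
    then show ?thesis using gA AP by simp
  qed
  define X where "X = matrix (g \<circ> P)"
  have X: "X *v y = g (P y)" for y
    unfolding X_def using matrix_vector_mul(2)[OF linear_compose[OF P(1) g(2)]] by (simp add: fun_eq_iff)
  have PA: "P (A *v y) = A *v y" for y
    using P(3) by (simp add: R_def)
  have AX: "(A ** X) *v y = P y" for y
    by (simp add: matrix_vector_mul_assoc[symmetric] X Ag)
  have XA: "(X ** A) *v y = P y" for y
    by (simp add: matrix_vector_mul_assoc[symmetric] X PA gA)
  have "A ** X ** A = A"
    using AX PA by (simp add: matrix_eq flip: matrix_vector_mul_assoc)
  moreover have "X ** A ** X = X"
    using XA P(3) g(1) by (auto simp: matrix_eq X image_subset_iff simp flip: matrix_vector_mul_assoc)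
  moreover have "transpose (A ** X) = A ** X" "transpose (X ** A) = X ** A"
    using P(4) AX XA transpose_eq_self_iff_self_adjoint by metis+
  ultimately show ?thesis unfolding is_pseudo_inverse_def by blast
qed

lemma pinv_is_pseudo_inverse:
  assumes "transpose A = A"
  shows "is_pseudo_inverse A (pinv A)"
proof -
  obtain X where X: "is_pseudo_inverse A X" using pseudo_inverse_exists[OF assms] ..
  then have "is_pseudo_inverse A (THE X. is_pseudo_inverse A X)"
    by (rule theI) (use X pseudo_inverse_unique in blast)
  then show ?thesis unfolding pinv_def is_pseudo_inverse_def .
qed

definition adjoint_coords :: "((real^'d) \<Rightarrow>\<^sub>L 'h::real_inner) \<Rightarrow> 'h \<Rightarrow> real^'d" where
  "adjoint_coords L y = (\<chi> i. L (axis i 1) \<bullet> y)"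

lemma blinfun_apply_eq_sum_axis:
  fixes L :: "(real^'d) \<Rightarrow>\<^sub>L 'h::real_normed_vector"
  shows "L c = (\<Sum>i\<in>UNIV. c $ i *\<^sub>R L (axis i 1))"
proof -
  have "L c = L (\<Sum>i\<in>UNIV. c $ i *\<^sub>R axis i 1)"
    using basis_expansion[of c] by (simp add: scalar_mult_eq_scaleR)
  then show ?thesis by (simp add: blinfun.sum_right blinfun.scaleR_right)
qed

lemma inner_adjoint_coords: "c \<bullet> adjoint_coords L y = L c \<bullet> y"
  by (simp add: adjoint_coords_def inner_vec_def blinfun_apply_eq_sum_axis[of L c] inner_sum_left)

lemma adjoint_coords_diff: "adjoint_coords L (a - b) = adjoint_coords L a - adjoint_coords L b"
  by (simp add: adjoint_coords_def vec_eq_iff inner_diff_right)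

lemma adjoint_coords_scaleR: "adjoint_coords L (r *\<^sub>R y) = r *\<^sub>R adjoint_coords L y"
  by (simp add: adjoint_coords_def vec_eq_iff)

lemma psiT_eq_blinfun_apply: "psiT DD \<theta> c = DD \<theta> c"
  by (simp add: psiT_def psi_def blinfun_apply_eq_sum_axis[of "DD \<theta>" c])

lemma cross_gramX_mult: "cross_gramX DD \<theta> \<theta>' *v c = adjoint_coords (DD \<theta>) (DD \<theta>' c)"
  by (simp add: cross_gramX_def adjoint_coords_def matrix_vector_mult_def psi_def vec_eq_iff
      blinfun_apply_eq_sum_axis[of "DD \<theta>'" c] inner_sum_right mult.commute)

lemma gramX_mult: "gramX DD \<theta> *v c = adjoint_coords (DD \<theta>) (DD \<theta> c)"
  using cross_gramX_mult[of DD \<theta> \<theta> c] by (simp add: gramX_def cross_gramX_def)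

lemma zvec_eq_adjoint_coords: "zvec D DD \<theta>0 \<theta>1 = adjoint_coords (DD \<theta>1) (D \<theta>1 - D \<theta>0)"
  by (simp add: zvec_def adjoint_coords_def psi_def)

lemma gram_symmetric:
  assumes gram: "\<And>c. A *v c = adjoint_coords L (L c)"
  shows "transpose A = A"
  unfolding transpose_eq_self_iff_self_adjoint
  by (metis gram inner_adjoint_coords inner_commute)

text \<open>With \<open>A = L\<^sup>* L\<close>, the operator \<open>L X L\<^sup>*\<close> is the orthogonal projection onto the range of
  \<open>L\<close>: the residual \<open>r - L X L\<^sup>* r\<close> lies in the kernel of \<open>L\<^sup>*\<close>.\<close>

lemma gram_pseudo_inverse_adjoint:
  assumes gram: "\<And>c. A *v c = adjoint_coords L (L c)"
    and X: "is_pseudo_inverse A X"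
  shows "A *v (X *v adjoint_coords L r) = adjoint_coords L r"
proof -
  have symA: "transpose A = A" using gram_symmetric[OF gram] .
  have AX: "A ** X ** A = A" "transpose (A ** X) = A ** X"
    using X by (auto simp: is_pseudo_inverse_def)
  have "A ** (A ** X) = transpose (A ** X ** A)"
    by (simp only: matrix_transpose_mul[of "A ** X" A] symA AX(2))
  then have AAX: "A ** (A ** X) = A" using AX(1) symA by simp
  have "L (c - (A ** X) *v c) = 0" for c
  proof -
    define d where "d = c - (A ** X) *v c"
    have "A *v d = 0"
      using AAX by (simp add: d_def matrix_vector_mult_diff_distrib matrix_vector_mul_assoc)
    moreover have "L d \<bullet> L d = d \<bullet> (A *v d)"
      by (simp add: gram inner_adjoint_coords)
    ultimately show ?thesis by (simp add: d_def)
  qed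
  moreover have "(w - (A ** X) *v w) \<bullet> c = w \<bullet> (c - (A ** X) *v c)" for w c
    using AX(2) transpose_eq_self_iff_self_adjoint[of "A ** X"]
    by (simp add: inner_diff_left inner_diff_right)
  ultimately have "(adjoint_coords L r - (A ** X) *v adjoint_coords L r) \<bullet> c = 0" for c
    by (simp add: inner_commute[of "adjoint_coords L r"] inner_adjoint_coords)
  then show ?thesis
    by (metis inner_eq_zero_iff matrix_vector_mul_assoc eq_iff_diff_eq_0)
qed

lemma gram_pseudo_inverse_contraction:
  assumes gram: "\<And>c. A *v c = adjoint_coords L (L c)"
    and X: "is_pseudo_inverse A X"
  shows "norm (L (X *v adjoint_coords L r)) \<le> norm r"
proof -
  define u where "u = L (X *v adjoint_coords L r)"
  have "adjoint_coords L u = adjoint_coords L r"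
    using gram_pseudo_inverse_adjoint[OF gram X] by (simp add: u_def gram)
  then have "u \<bullet> (r - u) = 0"
    by (simp add: u_def inner_adjoint_coords[symmetric] adjoint_coords_diff)
  then have "(norm r)\<^sup>2 = (norm u)\<^sup>2 + (norm (r - u))\<^sup>2"
    using norm_add_Pythagorean[of u "r - u"] by (simp add: orthogonal_def)
  then have "(norm u)\<^sup>2 \<le> (norm r)\<^sup>2" by simp
  then show ?thesis
    unfolding u_def by (rule power2_le_imp_le) simp
qed

lemma norm_psiT_pinv_gramX_le:
  "norm (psiT DD \<theta> (pinv (gramX DD \<theta>) *v adjoint_coords (DD \<theta>) r)) \<le> norm r"
  using gram_pseudo_inverse_contraction[OF gramX_mult pinv_is_pseudo_inverse[OF gram_symmetric[OF gramX_mult]]]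
  by (simp add: psiT_eq_blinfun_apply)

lemma psiT_fd_momentum_minus_hb_momentum:
  assumes "h \<noteq> 0" and \<theta>1: "\<theta>1 = \<theta>0 + h *\<^sub>R p"
  shows "psiT DD \<theta>1 (fd_momentum D DD Gk g \<beta> hk h \<theta>0 \<theta>1) - psiT DD \<theta>1 (hb_momentum DD Gk g \<beta> hk \<theta>0 \<theta>1 p)
    = (\<beta> / h) *\<^sub>R psiT DD \<theta>1 (pinv (gramX DD \<theta>1) *v
        adjoint_coords (DD \<theta>1) (D \<theta>1 - D \<theta>0 - DD \<theta>0 (\<theta>1 - \<theta>0)))"
proof -
  define proj where "proj y = psiT DD \<theta>1 (pinv (gramX DD \<theta>1) *v adjoint_coords (DD \<theta>1) y)" for y
  have proj_diff: "proj (y - z) = proj y - proj z" for y z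
    by (simp add: proj_def psiT_eq_blinfun_apply adjoint_coords_diff matrix_vector_mult_diff_distrib
        blinfun.diff_right)
  have "psiT DD \<theta>1 (fd_momentum D DD Gk g \<beta> hk h \<theta>0 \<theta>1) - psiT DD \<theta>1 (hb_momentum DD Gk g \<beta> hk \<theta>0 \<theta>1 p)
      = (\<beta> / h) *\<^sub>R proj (D \<theta>1 - D \<theta>0) - \<beta> *\<^sub>R proj (DD \<theta>0 p)"
    by (simp add: proj_def fd_momentum_def hb_momentum_def zvec_eq_adjoint_coords cross_gramX_mult
        psiT_eq_blinfun_apply blinfun.diff_right blinfun.scaleR_right)
  also have "\<beta> *\<^sub>R proj (DD \<theta>0 p) = (\<beta> / h) *\<^sub>R proj (DD \<theta>0 (\<theta>1 - \<theta>0))"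
    using assms by (simp add: proj_def psiT_eq_blinfun_apply adjoint_coords_scaleR matrix_vector_mult_scaleR
        blinfun.scaleR_right)
  finally show ?thesis
    by (simp add: proj_def[symmetric] proj_diff scaleR_diff_right)
qed

lemma norm_psiT_momentum_gap_le:
  assumes "h > 0" "\<beta> \<ge> 0" "\<theta>1 = \<theta>0 + h *\<^sub>R p"
  shows "norm (psiT DD \<theta>1 (fd_momentum D DD Gk g \<beta> hk h \<theta>0 \<theta>1) - psiT DD \<theta>1 (hb_momentum DD Gk g \<beta> hk \<theta>0 \<theta>1 p))
    \<le> \<beta> / h * norm (D \<theta>1 - D \<theta>0 - DD \<theta>0 (\<theta>1 - \<theta>0))"
proof -
  define r where "r = D \<theta>1 - D \<theta>0 - DD \<theta>0 (\<theta>1 - \<theta>0)"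
  have "norm (psiT DD \<theta>1 (fd_momentum D DD Gk g \<beta> hk h \<theta>0 \<theta>1) - psiT DD \<theta>1 (hb_momentum DD Gk g \<beta> hk \<theta>0 \<theta>1 p))
      = \<beta> / h * norm (psiT DD \<theta>1 (pinv (gramX DD \<theta>1) *v adjoint_coords (DD \<theta>1) r))"
    using assms by (subst psiT_fd_momentum_minus_hb_momentum[OF _ assms(3)]) (auto simp: r_def)
  also have "\<dots> \<le> \<beta> / h * norm r"
    using assms by (intro mult_left_mono norm_psiT_pinv_gramX_le) simp
  finally show ?thesis unfolding r_def .
qed

lemma second_order_taylor_remainder:
  fixes D :: "'a::real_normed_vector \<Rightarrow> 'b::real_normed_vector"
    and DD :: "'a \<Rightarrow> 'a \<Rightarrow>\<^sub>L 'b" and DD2 :: "'a \<Rightarrow> 'a \<Rightarrow>\<^sub>L 'a \<Rightarrow>\<^sub>L 'b"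
  assumes D_deriv: "\<And>x. (D has_derivative DD x) (at x)"
    and DD_deriv: "(DD has_derivative DD2 a) (at a)"
    and "e > 0"
  obtains \<delta> where "\<delta> > 0" "\<And>s. norm s < \<delta> \<Longrightarrow>
    norm (D (a + s) - D a - DD a s - (1/2) *\<^sub>R DD2 a s s) \<le> e * (norm s)\<^sup>2"
proof -
  obtain \<delta> where "\<delta> > 0" and DD_near: "\<And>y. norm (y - a) < \<delta> \<Longrightarrow>
      norm (DD y - DD a - DD2 a (y - a)) \<le> e * norm (y - a)"
    using DD_deriv[unfolded has_derivative_at_alt] \<open>e > 0\<close> by blast
  moreover have "norm (D (a + s) - D a - DD a s - (1/2) *\<^sub>R DD2 a s s) \<le> e * (norm s)\<^sup>2"
    if s: "norm s < \<delta>" for s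
  proof -
    define g where "g t = D (a + t *\<^sub>R s) - t *\<^sub>R DD a s - (t\<^sup>2 / 2) *\<^sub>R DD2 a s s" for t :: real
    define g' where "g' t = DD (a + t *\<^sub>R s) s - DD a s - t *\<^sub>R DD2 a s s" for t :: real
    have "(g has_derivative (\<lambda>u. u *\<^sub>R g' t)) (at t within {0..1})" for t
    proof -
      have "((\<lambda>t. D (a + t *\<^sub>R s)) has_derivative (\<lambda>u. DD (a + t *\<^sub>R s) (u *\<^sub>R s))) (at t within {0..1})"
        by (rule has_derivative_compose[OF _ D_deriv[THEN has_derivative_at_withinI]])
          (auto intro!: derivative_eq_intros)
      then show ?thesis
        unfolding g_def[abs_def] g'_def
        by (auto intro!: derivative_eq_intros simp: blinfun.scaleR_right algebra_simps)
    qed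
    moreover have "onorm (\<lambda>u. u *\<^sub>R g' t) \<le> e * (norm s)\<^sup>2" if "t \<in> {0..1}" for t
    proof -
      have t: "norm (t *\<^sub>R s) \<le> norm s" using that by (auto intro: mult_left_le_one_le)
      have "g' t = (DD (a + t *\<^sub>R s) - DD a - DD2 a ((a + t *\<^sub>R s) - a)) s"
        by (simp add: g'_def blinfun.diff_left blinfun.scaleR_right blinfun.scaleR_left)
      also have "norm \<dots> \<le> e * norm (t *\<^sub>R s) * norm s"
        using DD_near[of "a + t *\<^sub>R s"] t s
        by (intro order.trans[OF norm_blinfun] mult_right_mono) auto
      also have "\<dots> \<le> e * norm s * norm s"
        using t \<open>e > 0\<close> by (intro mult_right_mono mult_left_mono) auto
      also have "\<dots> = e * (norm s)\<^sup>2"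
        by (simp add: power2_eq_square)
      finally have "norm (g' t) \<le> e * (norm s)\<^sup>2" .
      moreover have "onorm (\<lambda>u. u *\<^sub>R g' t) = norm (g' t)"
        using onorm_scaleR_left[OF bounded_linear_ident, of "g' t"] by (simp add: onorm_id)
      ultimately show ?thesis by simp
    qed
    ultimately have "norm (g 1 - g 0) \<le> e * (norm s)\<^sup>2 * norm (1 - 0 :: real)"
      by (intro differentiable_bound[of "{0..1}"]) auto
    then show ?thesis
      by (simp add: g_def algebra_simps)
  qed
  ultimately show ?thesis using that by blast
qed

lemma norm_blinfun_diag_le_SUP_sphere:
  fixes B :: "'a::real_normed_vector \<Rightarrow>\<^sub>L 'a \<Rightarrow>\<^sub>L 'b::real_normed_vector"
  shows "norm (B s s) \<le> (SUP q\<in>sphere 0 1. norm (B q q)) * (norm s)\<^sup>2"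
proof (cases "s = 0")
  case False
  define q where "q = s /\<^sub>R norm s"
  have q: "q \<in> sphere 0 1" using False by (simp add: q_def)
  have "norm (B v v) \<le> norm B" if "v \<in> sphere 0 1" for v
    using that norm_blinfun[of "B v" v] norm_blinfun[of B v] by simp
  then have "norm (B q q) \<le> (SUP q\<in>sphere 0 1. norm (B q q))"
    by (intro cSUP_upper[OF q] bdd_aboveI2)
  moreover have "B s s = (norm s)\<^sup>2 *\<^sub>R B q q"
    using False by (simp add: q_def blinfun.scaleR_right blinfun.scaleR_left power2_eq_square field_simps)
  ultimately show ?thesis
    by (simp add: mult.commute mult_left_mono)
qed simp

lemma first_order_remainder_le:
  fixes D :: "real^'d \<Rightarrow> 'h::real_normed_vector"
    and DD :: "real^'d \<Rightarrow> (real^'d) \<Rightarrow>\<^sub>L 'h"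
    and DD2 :: "real^'d \<Rightarrow> (real^'d) \<Rightarrow>\<^sub>L (real^'d) \<Rightarrow>\<^sub>L 'h"
  assumes D_deriv: "\<And>\<theta>. (D has_derivative DD \<theta>) (at \<theta>)"
    and DD_deriv: "(DD has_derivative DD2 \<theta>0) (at \<theta>0)"
    and "e > 0"
  obtains \<delta> where "\<delta> > 0" "\<And>s. norm s < \<delta> \<Longrightarrow>
    norm (D (\<theta>0 + s) - D \<theta>0 - DD \<theta>0 s) \<le> (kappa_max DD2 \<theta>0 / 2 + e) * (norm s)\<^sup>2"
proof -
  obtain \<delta> where "\<delta> > 0" and taylor: "\<And>s. norm s < \<delta> \<Longrightarrow>
      norm (D (\<theta>0 + s) - D \<theta>0 - DD \<theta>0 s - (1/2) *\<^sub>R DD2 \<theta>0 s s) \<le> e * (norm s)\<^sup>2"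
    using second_order_taylor_remainder[where DD = DD and ?DD2.0 = DD2, OF D_deriv DD_deriv \<open>e > 0\<close>] by blast
  moreover have "norm (D (\<theta>0 + s) - D \<theta>0 - DD \<theta>0 s) \<le> (kappa_max DD2 \<theta>0 / 2 + e) * (norm s)\<^sup>2"
    if "norm s < \<delta>" for s
  proof -
    have "norm (DD2 \<theta>0 s s) \<le> kappa_max DD2 \<theta>0 * (norm s)\<^sup>2"
      using norm_blinfun_diag_le_SUP_sphere[of "DD2 \<theta>0" s] by (simp add: kappa_max_def)
    then show ?thesis
      using taylor[OF that] norm_triangle_sub[of "D (\<theta>0 + s) - D \<theta>0 - DD \<theta>0 s" "(1/2) *\<^sub>R DD2 \<theta>0 s s"]
      by (simp add: algebra_simps)
  qed
  ultimately show ?thesis using that by blast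
qed

theorem mainTheorem4:
  fixes D :: "real^'d \<Rightarrow> 'h::real_inner"
    and DD :: "real^'d \<Rightarrow> ((real^'d) \<Rightarrow>\<^sub>L 'h)"
    and DD2 :: "real^'d \<Rightarrow> ((real^'d) \<Rightarrow>\<^sub>L ((real^'d) \<Rightarrow>\<^sub>L 'h))"
    and G :: "real^'d \<Rightarrow> real^'d^'d"
    and gradL :: "real^'d \<Rightarrow> real^'d"
    and \<theta>0 :: "real^'d" and hk \<beta>k :: real
  assumes D_deriv: "\<And>\<theta>. (D has_derivative blinfun_apply (DD \<theta>)) (at \<theta>)"
    and DD_deriv: "\<And>\<theta>. (DD has_derivative blinfun_apply (DD2 \<theta>)) (at \<theta>)"
    and DD2_cont: "continuous_on UNIV DD2"
    and G_sym: "\<And>\<theta>. transpose (G \<theta>) = G \<theta>"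
    and G_psd: "\<And>\<theta> x. 0 \<le> x \<bullet> (G \<theta> *v x)"
    and hk_pos: "hk > 0"
    and \<beta>k_nonneg: "\<beta>k \<ge> 0"
  shows "\<forall>\<epsilon>>0. \<exists>\<delta>>0. \<forall>h p. 0 < h \<and> h * norm p < \<delta> \<longrightarrow>
          (let \<theta>1 = \<theta>0 + h *\<^sub>R p;
               pk = hb_momentum DD (G \<theta>1) (gradL \<theta>1) \<beta>k hk \<theta>0 \<theta>1 p;
               pk_hat = fd_momentum D DD (G \<theta>1) (gradL \<theta>1) \<beta>k hk h \<theta>0 \<theta>1
           in norm (psiT DD \<theta>1 pk_hat - psiT DD \<theta>1 pk)
              \<le> h / 2 * \<beta>k * kappa_max DD2 \<theta>0 * (norm p)\<^sup>2 + \<epsilon> * (h * (norm p)\<^sup>2))"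
proof (intro allI impI, goal_cases)
  case (1 \<epsilon>)
  define e where "e = \<epsilon> / (\<beta>k + 1)"
  have e: "e > 0" "\<beta>k * e \<le> \<epsilon>"
    using 1 \<beta>k_nonneg by (auto simp: e_def field_simps)
  obtain \<delta> where "\<delta> > 0" and remainder: "\<And>s. norm s < \<delta> \<Longrightarrow>
      norm (D (\<theta>0 + s) - D \<theta>0 - DD \<theta>0 s) \<le> (kappa_max DD2 \<theta>0 / 2 + e) * (norm s)\<^sup>2"
    using first_order_remainder_le[where DD = DD and ?DD2.0 = DD2, OF D_deriv DD_deriv[of \<theta>0] \<open>e > 0\<close>] by blast
  have "norm (psiT DD \<theta>1 (fd_momentum D DD Gk g \<beta>k hk h \<theta>0 \<theta>1) - psiT DD \<theta>1 (hb_momentum DD Gk g \<beta>k hk \<theta>0 \<theta>1 p))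
      \<le> h / 2 * \<beta>k * kappa_max DD2 \<theta>0 * (norm p)\<^sup>2 + \<epsilon> * (h * (norm p)\<^sup>2)"
    if h: "0 < h" "h * norm p < \<delta>" and \<theta>1: "\<theta>1 = \<theta>0 + h *\<^sub>R p" for h p \<theta>1 Gk g
  proof -
    have "norm (psiT DD \<theta>1 (fd_momentum D DD Gk g \<beta>k hk h \<theta>0 \<theta>1) - psiT DD \<theta>1 (hb_momentum DD Gk g \<beta>k hk \<theta>0 \<theta>1 p))
        \<le> \<beta>k / h * norm (D \<theta>1 - D \<theta>0 - DD \<theta>0 (\<theta>1 - \<theta>0))"
      using norm_psiT_momentum_gap_le[OF h(1) \<beta>k_nonneg \<theta>1] .
    also have "\<dots> \<le> \<beta>k / h * ((kappa_max DD2 \<theta>0 / 2 + e) * (h * norm p)\<^sup>2)"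
      using remainder[of "h *\<^sub>R p"] h \<beta>k_nonneg \<theta>1 by (intro mult_left_mono) auto
    also have "\<dots> = h / 2 * \<beta>k * kappa_max DD2 \<theta>0 * (norm p)\<^sup>2 + \<beta>k * e * (h * (norm p)\<^sup>2)"
      using h by (simp add: field_simps power2_eq_square)
    also have "\<dots> \<le> h / 2 * \<beta>k * kappa_max DD2 \<theta>0 * (norm p)\<^sup>2 + \<epsilon> * (h * (norm p)\<^sup>2)"
      using e h by (intro add_left_mono mult_right_mono) auto
    finally show ?thesis .
  qed
  then show ?case
    using \<open>\<delta> > 0\<close> unfolding Let_def by blast
qed

end
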